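(* Let $k>24$ be an integer. Then for every finite point set $\mathcal{P}\subset\mathbb{R}^2$, the overlapping Yao graph $\mathsf{OY}_k(\mathcal{P})$ is a geometric $\tau_k$-spanner, where $$\tau_k=\left(1-2\sin\Big(\frac{\pi}{k}+\frac{\pi}{8}\Big)\right)^{-1}.$$
   Context: Polar angles are measured from the positive $x$-axis, modulo $2\pi$. $C_u(\gamma_1,\gamma_2)$ denotes the set of points $w\neq u$ such that the polar angle of $\overrightarrow{uw}$ lies in $[\gamma_1,\gamma_2)$. Overlapping Yao graph $\mathsf{OY}_k(\mathcal{P})$: let $\gamma=\lceil k/4\rceil\cdot 2\pi/k$; for each $u\in\mathcal{P}$ and each $j=0,\dots,k-1$, among the points $v\in\mathcal{P}\cap C_u(2j\pi/k,\,2j\pi/k+\gamma)$ (if any) select one with $|uv|$ smallest and add the edge $\overrightarrow{uv}$ (ties broken arbitrarily but consistently). A graph $G$ with vertex set $\mathcal{P}$ (edges regarded as undirected with Euclidean lengths) is a geometric $t$-spanner if for all $u,v\in\mathcal{P}$ the shortest $u$-$v$ path in $G$ has length at most $t|uv|$. *)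

theory Defs
  imports "HOL-Analysis.Analysis"
begin

text \<open>Points of the plane are complex numbers. The polar angle of a nonzero
  vector, measured from the positive x-axis, normalised into [0, 2 pi).\<close>
definition polar_angle :: "complex \<Rightarrow> real" where
  "polar_angle z = (if Arg z < 0 then Arg z + 2 * pi else Arg z)"

definition in_cone :: "complex \<Rightarrow> real \<Rightarrow> real \<Rightarrow> complex \<Rightarrow> bool" where
  "in_cone u g1 g2 w \<longleftrightarrow> w \<noteq> u \<and>
     (\<exists>m::int. g1 \<le> polar_angle (w - u) + 2 * pi * of_int m \<and>
               polar_angle (w - u) + 2 * pi * of_int m < g2)"

definition oy_gamma :: "nat \<Rightarrow> real" where
  "oy_gamma k = of_int \<lceil>real k / 4\<rceil> * 2 * pi / real k"

definition oy_cone :: "nat \<Rightarrow> complex \<Rightarrow> nat \<Rightarrow> complex \<Rightarrow> bool" where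
  "oy_cone k u j w = in_cone u (2 * real j * pi / real k) (2 * real j * pi / real k + oy_gamma k) w"

text \<open>Ties may be broken by any fixed rule, i.e. by any such function sel.\<close>
definition is_OY_selection :: "nat \<Rightarrow> complex set \<Rightarrow> (complex \<Rightarrow> nat \<Rightarrow> complex option) \<Rightarrow> bool" where
  "is_OY_selection k P sel \<longleftrightarrow>
     (\<forall>u\<in>P. \<forall>j<k.
        (if \<exists>v\<in>P. oy_cone k u j v
         then (\<exists>v. sel u j = Some v \<and> v \<in> P \<and> oy_cone k u j v \<and>
                    (\<forall>w\<in>P. oy_cone k u j w \<longrightarrow> dist u v \<le> dist u w))
         else sel u j = None))"

definition OY_edges :: "nat \<Rightarrow> complex set \<Rightarrow> (complex \<Rightarrow> nat \<Rightarrow> complex option) \<Rightarrow> (complex \<times> complex) set" where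
  "OY_edges k P sel = {(u, v). u \<in> P \<and> (\<exists>j<k. sel u j = Some v)}"

definition path_length :: "complex list \<Rightarrow> real" where
  "path_length ps = sum_list (map (\<lambda>(a, b). dist a b) (zip ps (tl ps)))"

definition geometric_spanner :: "complex set \<Rightarrow> (complex \<times> complex) set \<Rightarrow> real \<Rightarrow> bool" where
  "geometric_spanner P E t \<longleftrightarrow>
     (\<forall>u\<in>P. \<forall>v\<in>P. \<exists>ps. ps \<noteq> [] \<and> hd ps = u \<and> last ps = v \<and> set ps \<subseteq> P \<and>
        (\<forall>i < length ps - 1. (ps ! i, ps ! Suc i) \<in> E \<or> (ps ! Suc i, ps ! i) \<in> E) \<and>
        path_length ps \<le> t * dist u v)"

end

theory Submission
  imports Defs
begin

text \<open>Route greedily: to reach v from u, follow the edge of u into a cone containing v. Since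
  the overlapping cones have angular width about pi/2 and can be chosen with v near their bisector,
  every point w of that cone is seen from u within angle pi/k + pi/8 of the direction of v, and
  if w is the closest point of the cone then |wv| \<le> |uv| - (1 - 2 sin(pi/k + pi/8)) |uw|.
  Hence the distance to v strictly decreases along the route, and summing the inequality bounds
  the total length by |uv| / (1 - 2 sin(pi/k + pi/8)).\<close>

definition is_walk :: "complex set \<Rightarrow> (complex \<times> complex) set \<Rightarrow> complex list \<Rightarrow> bool" where
  "is_walk P E ps \<longleftrightarrow> ps \<noteq> [] \<and> set ps \<subseteq> P \<and>
     (\<forall>i < length ps - 1. (ps ! i, ps ! Suc i) \<in> E \<or> (ps ! Suc i, ps ! i) \<in> E)"

lemma geometric_spanner_iff_walks:
  "geometric_spanner P E t \<longleftrightarrow>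
     (\<forall>u\<in>P. \<forall>v\<in>P. \<exists>ps. is_walk P E ps \<and> hd ps = u \<and> last ps = v \<and> path_length ps \<le> t * dist u v)"
  unfolding geometric_spanner_def is_walk_def by (simp only: conj_ac)

lemma is_walk_singleton: "v \<in> P \<Longrightarrow> is_walk P E [v]"
  by (simp add: is_walk_def)

lemma is_walk_Cons:
  assumes "is_walk P E ps" "u \<in> P" "(u, hd ps) \<in> E"
  shows "is_walk P E (u # ps)"
  unfolding is_walk_def
proof (intro conjI allI impI)
  show "set (u # ps) \<subseteq> P" using assms(1,2) by (simp add: is_walk_def)
next
  fix i assume i: "i < length (u # ps) - 1"
  show "((u # ps) ! i, (u # ps) ! Suc i) \<in> E \<or> ((u # ps) ! Suc i, (u # ps) ! i) \<in> E"
  proof (cases i)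
    case 0
    then show ?thesis using assms(1,3) by (cases ps) (auto simp: is_walk_def)
  next
    case (Suc i')
    then show ?thesis using assms(1) i by (simp add: is_walk_def)
  qed
qed simp

lemma path_length_Cons: "ps \<noteq> [] \<Longrightarrow> path_length (u # ps) = dist u (hd ps) + path_length ps"
  by (cases ps) (simp_all add: path_length_def)

lemma geometric_spanner_of_greedy_progress:
  fixes P :: "complex set" and E :: "(complex \<times> complex) set" and c :: real
  assumes "finite P" and "c > 0"
    and progress: "\<And>u v. u \<in> P \<Longrightarrow> v \<in> P \<Longrightarrow> u \<noteq> v \<Longrightarrow>
      \<exists>w\<in>P. w \<noteq> u \<and> (u, w) \<in> E \<and> dist w v \<le> dist u v - c * dist u w"
  shows "geometric_spanner P E (1 / c)"
  unfolding geometric_spanner_iff_walks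
proof (intro ballI)
  fix u v assume "u \<in> P" "v \<in> P"
  then show "\<exists>ps. is_walk P E ps \<and> hd ps = u \<and> last ps = v \<and> path_length ps \<le> 1 / c * dist u v"
  proof (induction "card {x\<in>P. dist x v < dist u v}" arbitrary: u rule: less_induct)
    case (less u)
    show ?case
    proof (cases "u = v")
      case True
      with \<open>v \<in> P\<close> show ?thesis
        by (intro exI[of _ "[v]"]) (simp add: is_walk_singleton path_length_def)
    next
      case False
      then obtain w where "w \<in> P" "w \<noteq> u" "(u, w) \<in> E"
        and step: "dist w v \<le> dist u v - c * dist u w"
        using progress less.prems by blast
      have "dist w v < dist u v"
        using step \<open>w \<noteq> u\<close> \<open>c > 0\<close> by (smt (verit) mult_pos_pos zero_less_dist_iff)
      then have "w \<in> {x\<in>P. dist x v < dist u v} - {x\<in>P. dist x v < dist w v}"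
        "{x\<in>P. dist x v < dist w v} \<subseteq> {x\<in>P. dist x v < dist u v}"
        using \<open>w \<in> P\<close> by auto
      then have "card {x\<in>P. dist x v < dist w v} < card {x\<in>P. dist x v < dist u v}"
        using \<open>finite P\<close> by (intro psubset_card_mono) auto
      then obtain ps where ps: "is_walk P E ps" "hd ps = w" "last ps = v"
        and len: "path_length ps \<le> 1 / c * dist w v"
        using less.hyps less.prems(2) \<open>w \<in> P\<close> by blast
      have "ps \<noteq> []" using ps(1) by (simp add: is_walk_def)
      then have "path_length (u # ps) = dist u w + path_length ps"
        using ps(2) by (simp add: path_length_Cons)
      also have "\<dots> \<le> dist u w + 1 / c * (dist u v - c * dist u w)"
        using len step \<open>c > 0\<close> by (smt (verit) divide_pos_pos mult_left_mono)
      also have "\<dots> = 1 / c * dist u v"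
        using \<open>c > 0\<close> by (simp add: field_simps)
      finally show ?thesis
        using ps \<open>ps \<noteq> []\<close> less.prems \<open>(u, w) \<in> E\<close>
        by (intro exI[of _ "u # ps"]) (simp add: is_walk_Cons)
    qed
  qed
qed

lemma sgn_eq_cis_polar_angle: "z \<noteq> 0 \<Longrightarrow> sgn z = cis (polar_angle z)"
  by (simp add: polar_angle_def cis_Arg flip: cis_mult)

lemma cis_add_multiple_2pi: "cis (x + 2 * pi * of_int m) = cis x"
  by (simp add: cis_mult [symmetric])

lemma norm_cis_diff_squared: "(norm (cis a - cis b))\<^sup>2 = 2 - 2 * cos (a - b)"
proof -
  have "(norm (cis a - cis b))\<^sup>2 = (cos a - cos b)\<^sup>2 + (sin a - sin b)\<^sup>2"
    by (simp add: cmod_power2)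
  also have "\<dots> = (sin a ^2 + cos a ^2) + (sin b ^2 + cos b^2) - 2 * (cos a * cos b + sin a * sin b)"
    by (simp add: power2_eq_square algebra_simps)
  also have "\<dots> = 2 - 2 * cos (a - b)" by (simp add: cos_diff)
  finally show ?thesis .
qed

lemma norm_cis_diff_le:
  assumes "\<bar>a - b\<bar> \<le> 2 * \<alpha>" "0 \<le> \<alpha>" "\<alpha> \<le> pi / 2"
  shows "norm (cis a - cis b) \<le> 2 * sin \<alpha>"
proof (rule power2_le_imp_le)
  have "cos (2 * \<alpha>) \<le> cos \<bar>a - b\<bar>"
    using assms by (subst cos_mono_le_eq) auto
  then have "2 - 2 * cos (a - b) \<le> 2 - 2 * cos (2 * \<alpha>)"
    by simp
  then show "(norm (cis a - cis b))\<^sup>2 \<le> (2 * sin \<alpha>)\<^sup>2"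
    by (simp add: norm_cis_diff_squared cos_double_sin power_mult_distrib)
  show "0 \<le> 2 * sin \<alpha>"
    using assms(2,3) by (simp add: sin_ge_zero)
qed

lemma dist_le_of_close_direction:
  fixes u v w :: complex and s :: real
  assumes "w \<noteq> u" "v \<noteq> u" "dist u w \<le> dist u v"
    and "norm (sgn (w - u) - sgn (v - u)) \<le> 2 * s"
  shows "dist w v \<le> dist u v - (1 - 2 * s) * dist u w"
proof -
  define a b where "a = norm (v - u)" and "b = norm (w - u)"
  define e where "e = sgn (v - u)"
  have "b \<le> a" "norm e = 1"
    using assms(2,3) by (simp_all add: a_def b_def e_def dist_norm norm_minus_commute norm_sgn)
  have "v - u = of_real a * e" "w - u = of_real b * sgn (w - u)"
    using assms(1,2) by (simp_all add: a_def b_def e_def sgn_div_norm scaleR_conv_of_real)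
  then have "v - w = of_real (a - b) * e + of_real b * (e - sgn (w - u))"
    by (simp add: algebra_simps flip: diff_diff_eq2)
  then have "norm (v - w) \<le> norm (of_real (a - b) * e) + norm (of_real b * (e - sgn (w - u)))"
    by (metis norm_triangle_ineq)
  also have "\<dots> = (a - b) + b * norm (sgn (w - u) - e)"
    using \<open>b \<le> a\<close> \<open>norm e = 1\<close>
    by (simp only: norm_mult norm_of_real) (simp add: b_def norm_minus_commute)
  also have "\<dots> \<le> (a - b) + b * (2 * s)"
    using assms(4) by (simp add: e_def b_def mult_left_mono)
  finally show ?thesis
    by (simp add: dist_norm a_def b_def norm_minus_commute algebra_simps)
qed

lemma oy_gamma_bounds:
  assumes "k > 0"
  shows "pi / 2 \<le> oy_gamma k" "oy_gamma k \<le> pi / 2 + 2 * pi / real k"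
proof -
  define C where "C = real_of_int \<lceil>real k / 4\<rceil>"
  have "real k / 4 \<le> C" "C \<le> real k / 4 + 1"
    unfolding C_def by linarith+
  moreover have "oy_gamma k = C * (2 * pi / real k)"
    by (simp add: oy_gamma_def C_def)
  moreover have "pi / 2 = real k / 4 * (2 * pi / real k)"
    "pi / 2 + 2 * pi / real k = (real k / 4 + 1) * (2 * pi / real k)"
    using assms by (simp_all add: field_simps)
  moreover have "0 \<le> 2 * pi / real k"
    by simp
  ultimately show "pi / 2 \<le> oy_gamma k" "oy_gamma k \<le> pi / 2 + 2 * pi / real k"
    by (metis mult_right_mono)+
qed

lemma exists_oy_cone_near_bisector:
  assumes "k > 0"
  shows "\<exists>j<k. \<exists>q::int. \<bar>\<theta> - 2 * pi * of_int q - (2 * real j * pi / real k + oy_gamma k / 2)\<bar> \<le> pi / real k"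
proof -
  define d where "d = pi / real k"
  have "d > 0" using assms by (simp add: d_def)
  define J where "J = round ((\<theta> - oy_gamma k / 2) / (2 * d))"
  have "\<bar>of_int J - (\<theta> - oy_gamma k / 2) / (2 * d)\<bar> * (2 * d) \<le> 1 / 2 * (2 * d)"
    using \<open>d > 0\<close> unfolding J_def by (intro mult_right_mono of_int_round_abs_le) auto
  then have near: "\<bar>\<theta> - 2 * d * of_int J - oy_gamma k / 2\<bar> \<le> d"
    using \<open>d > 0\<close> by (simp add: abs_mult_pos' [symmetric] left_diff_distrib abs_minus_commute
        field_simps)
  define j q where "j = nat (J mod int k)" and "q = J div int k"
  have "j < k" using assms by (simp add: j_def nat_less_iff)
  have "J = int j + int k * q" using assms by (simp add: j_def q_def)
  then have "2 * d * of_int J = 2 * real j * pi / real k + 2 * pi * of_int q"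
    using assms by (simp add: d_def field_simps)
  with near \<open>j < k\<close> show ?thesis
    by (intro exI[of _ j] conjI exI[of _ q]) (simp_all add: d_def algebra_simps)
qed

lemma oy_cone_with_narrow_directions:
  assumes "k > 24" and "v \<noteq> u"
  shows "\<exists>j<k. oy_cone k u j v \<and>
     (\<forall>w. oy_cone k u j w \<longrightarrow> norm (sgn (w - u) - sgn (v - u)) \<le> 2 * sin (pi / real k + pi / 8))"
proof -
  define d where "d = pi / real k"
  define g where "g = oy_gamma k"
  have "d > 0" "d < pi / 24"
    using assms(1) pi_gt_zero by (auto simp: d_def field_simps)
  have g: "pi / 2 \<le> g" "g \<le> pi / 2 + 2 * d"
    using oy_gamma_bounds assms(1) by (simp_all add: g_def d_def)
  have width: "2 * (pi / real k + pi / 8) = pi / 4 + 2 * d"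
    by (simp add: d_def)
  obtain j and q :: int where "j < k"
    and "\<bar>polar_angle (v - u) - 2 * pi * of_int q - (2 * real j * pi / real k + g / 2)\<bar> \<le> d"
    using exists_oy_cone_near_bisector[of k "polar_angle (v - u)"] assms(1)
    by (auto simp: g_def d_def)
  moreover define c where "c = 2 * real j * pi / real k"
  moreover define b where "b = polar_angle (v - u) + 2 * pi * of_int (- q)"
  ultimately have b: "c + g / 2 - d \<le> b" "b \<le> c + g / 2 + d"
    by (simp_all add: abs_le_iff)
  have "oy_cone k u j v"
    unfolding oy_cone_def in_cone_def g_def[symmetric] c_def[symmetric]
  proof (intro conjI exI[of _ "- q"])
    show "c \<le> polar_angle (v - u) + 2 * pi * of_int (- q)"
      "polar_angle (v - u) + 2 * pi * of_int (- q) < c + g"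
      using b g \<open>d < pi / 24\<close> unfolding b_def by linarith+
  qed (rule assms(2))
  moreover have "norm (sgn (w - u) - sgn (v - u)) \<le> 2 * sin (pi / real k + pi / 8)"
    if w_cone: "oy_cone k u j w" for w
  proof -
    obtain m :: int where "w \<noteq> u"
      and "c \<le> polar_angle (w - u) + 2 * pi * of_int m"
      and "polar_angle (w - u) + 2 * pi * of_int m < c + g"
      using w_cone unfolding oy_cone_def in_cone_def g_def c_def by blast
    with b g width have "\<bar>(polar_angle (w - u) + 2 * pi * of_int m) - b\<bar> \<le> 2 * (pi / real k + pi / 8)"
      unfolding abs_le_iff by linarith
    moreover have "sgn (w - u) = cis (polar_angle (w - u) + 2 * pi * of_int m)"
      "sgn (v - u) = cis b"
      using \<open>w \<noteq> u\<close> assms(2)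
      by (simp_all only: b_def cis_add_multiple_2pi) (simp_all add: sgn_eq_cis_polar_angle)
    moreover have "0 \<le> pi / real k + pi / 8" "pi / real k + pi / 8 \<le> pi / 2"
      using \<open>d > 0\<close> \<open>d < pi / 24\<close> unfolding d_def by linarith+
    ultimately show ?thesis
      by (simp add: norm_cis_diff_le)
  qed
  ultimately show ?thesis using \<open>j < k\<close> by blast
qed

lemma OY_progress_towards:
  assumes "k > 24" and "is_OY_selection k P sel" and "u \<in> P" "v \<in> P" "u \<noteq> v"
  shows "\<exists>w\<in>P. w \<noteq> u \<and> (u, w) \<in> OY_edges k P sel \<and>
           dist w v \<le> dist u v - (1 - 2 * sin (pi / real k + pi / 8)) * dist u w"
proof -
  obtain j where "j < k" and "oy_cone k u j v"
    and narrow: "\<forall>w. oy_cone k u j w \<longrightarrow> norm (sgn (w - u) - sgn (v - u)) \<le> 2 * sin (pi / real k + pi / 8)"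
    using oy_cone_with_narrow_directions assms(1,5) by metis
  then obtain w where "sel u j = Some w" "w \<in> P" "oy_cone k u j w"
    and closest: "\<forall>w'\<in>P. oy_cone k u j w' \<longrightarrow> dist u w \<le> dist u w'"
    using assms(2-4) unfolding is_OY_selection_def by (metis (no_types, lifting))
  have "w \<noteq> u" using \<open>oy_cone k u j w\<close> by (simp add: oy_cone_def in_cone_def)
  moreover have "(u, w) \<in> OY_edges k P sel"
    using assms(3) \<open>j < k\<close> \<open>sel u j = Some w\<close> by (auto simp: OY_edges_def)
  moreover have "dist w v \<le> dist u v - (1 - 2 * sin (pi / real k + pi / 8)) * dist u w"
    using closest narrow \<open>oy_cone k u j v\<close> \<open>oy_cone k u j w\<close> \<open>v \<in> P\<close> \<open>w \<noteq> u\<close> assms(5)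
    by (intro dist_le_of_close_direction) auto
  ultimately show ?thesis using \<open>w \<in> P\<close> by blast
qed

lemma sin_oy_angle_less_half:
  assumes "k > 24"
  shows "sin (pi / real k + pi / 8) < 1 / 2"
proof -
  have "pi / real k < pi / 24"
    using assms by (intro divide_strict_left_mono) auto
  moreover have "pi / real k > 0"
    using assms by simp
  ultimately have "sin (pi / real k + pi / 8) < sin (pi / 6)"
    by (subst sin_mono_less_eq) (use pi_gt_zero in linarith)+
  then show ?thesis by (simp add: sin_30)
qed

theorem lemma8:
  fixes k :: nat and P :: "complex set" and sel :: "complex \<Rightarrow> nat \<Rightarrow> complex option"
  assumes "k > 24" and "finite P" and "is_OY_selection k P sel"
  shows "geometric_spanner P (OY_edges k P sel) (1 / (1 - 2 * sin (pi / real k + pi / 8)))"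
proof (rule geometric_spanner_of_greedy_progress)
  show "1 - 2 * sin (pi / real k + pi / 8) > 0"
    using sin_oy_angle_less_half[OF assms(1)] by simp
  show "\<exists>w\<in>P. w \<noteq> u \<and> (u, w) \<in> OY_edges k P sel \<and>
          dist w v \<le> dist u v - (1 - 2 * sin (pi / real k + pi / 8)) * dist u w"
    if "u \<in> P" "v \<in> P" "u \<noteq> v" for u v
    using OY_progress_towards assms(1,3) that by blast
qed (rule assms(2))

end
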